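(* Let $v:\mathbb{R}^n\to(0,\infty)$ be continuous and let $C_0>0$. The following are equivalent: (1) $v(x+y)\le C_0\,v(x)v(y)$ for all $x,y\in\mathbb{R}^n$; (2) for all $1\le p,q,r\le\infty$ with $1+\frac1r=\frac1p+\frac1q$ and all measurable $f_1,f_2:\mathbb{R}^n\to\mathbb{C}$, \[ \|(f_1*f_2)v\|_r\le C_0\,\|f_1v\|_p\,\|f_2v\|_q . \]
   Context: $\|\cdot\|_p$ denotes the $L^p(\mathbb{R}^n)$ norm and $*$ the convolution on $\mathbb{R}^n$. *)

theory Defs
  imports "HOL-Analysis.Analysis"
begin

definition Lp_norm :: "ennreal \<Rightarrow> ('a::euclidean_space \<Rightarrow> complex) \<Rightarrow> ennreal" where
  "Lp_norm p f =
     (if p = top then Inf {c. AE x in lebesgue. ennreal (cmod (f x)) \<le> c}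
      else (let I = (\<integral>\<^sup>+ x. ennreal (cmod (f x) powr enn2real p) \<partial>lebesgue)
            in if I = top then top else ennreal (enn2real I powr (1 / enn2real p))))"

definition conv :: "('a::euclidean_space \<Rightarrow> complex) \<Rightarrow> ('a \<Rightarrow> complex) \<Rightarrow> 'a \<Rightarrow> complex" where
  "conv f g x = (\<integral> y. f (x - y) * g y \<partial>lebesgue)"

end

theory Submission
  imports Defs
begin

(* Submultiplicativity gives the pointwise domination
   |(f1 * f2)(x)| v(x) <= C0 int |f1 v|(x - y) |f2 v|(y) dy  (weighted_conv_dominated), so the
   claim follows from Young's inequality for functions dominated by a nonnegative convolution
   (young_dominated).  That is proved in the classical way: a three-term AM-GM inequality bounds
   F(x - y) G(y) pointwise, and Tonelli's theorem integrates the bound; Tonelli is applied to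
   Borel representatives, using that reflection and translation preserve Lebesgue measure.
   The exponent relation leaves four cases (young_exponent_cases); the three with r = oo are
   pointwise bounds, Hoelder's inequality being the degenerate instance of the same argument.

   Testing the inequality for (p, q, r) = (oo, 1, oo) on the weighted indicators of
   B(x, 2 eps) and B(y, eps), whose convolution equals |B(y, eps)| on B(x + y, eps), gives
   v(x + y) - eta <= C0 (v(x) + eta) (v(y) + eta) for small eps by continuity of v; letting
   eta -> 0 yields submultiplicativity. *)

lemma
  fixes x :: "'a::euclidean_space"
  shows reflect_measurable: "(\<lambda>y. x - y) \<in> lebesgue \<rightarrow>\<^sub>M lebesgue"
    and distr_reflect: "distr lebesgue lebesgue (\<lambda>y. x - y) = lebesgue"
proof -
  have T: "(\<lambda>y. x + (\<Sum>j\<in>Basis. (-1 * (y \<bullet> j)) *\<^sub>R j)) = (\<lambda>y::'a. x - y)"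
    by (simp add: fun_eq_iff sum_negf euclidean_representation)
  show "(\<lambda>y. x - y) \<in> lebesgue \<rightarrow>\<^sub>M lebesgue"
    using lebesgue_affine_measurable[of "\<lambda>_. -1" x] unfolding T by simp
  show "distr lebesgue lebesgue (\<lambda>y. x - y) = lebesgue"
    using lebesgue_affine_euclidean[of "\<lambda>_. -1" x] unfolding T by (simp add: density_1)
qed

lemma measurable_reflect:
  fixes x :: "'a::euclidean_space"
  assumes "F \<in> borel_measurable lebesgue"
  shows "(\<lambda>y. F (x - y)) \<in> borel_measurable lebesgue"
  using measurable_compose[OF reflect_measurable assms] .

lemma AE_reflect:
  fixes x :: "'a::euclidean_space"
  assumes "AE z in lebesgue. P z"
  shows "AE y in lebesgue. P (x - y)"
  by (rule AE_distrD[OF reflect_measurable]) (simp only: distr_reflect assms)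

lemma nn_integral_reflect:
  fixes x :: "'a::euclidean_space" and h :: "'a \<Rightarrow> ennreal"
  assumes "h \<in> borel_measurable lebesgue"
  shows "(\<integral>\<^sup>+y. h (x - y) \<partial>lebesgue) = (\<integral>\<^sup>+y. h y \<partial>lebesgue)"
proof -
  have "(\<integral>\<^sup>+y. h y \<partial>lebesgue) = (\<integral>\<^sup>+y. h y \<partial>distr lebesgue lebesgue (\<lambda>y. x - y))"
    by (simp add: distr_reflect)
  also have "\<dots> = (\<integral>\<^sup>+y. h (x - y) \<partial>lebesgue)"
    using assms by (intro nn_integral_distr reflect_measurable) simp
  finally show ?thesis ..
qed

text \<open>A Lebesgue measurable \<open>u\<close> composed with \<open>(x, y) \<mapsto> x - y\<close> need not be measurable for
  the product of the Lebesgue \<open>\<sigma>\<close>-algebras, so nonnegative convolutions are handled through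
  Borel representatives: these do not change the convolution at any point.\<close>
lemma nn_conv_borel_representatives:
  fixes u w :: "'a::euclidean_space \<Rightarrow> ennreal"
  assumes u: "u \<in> borel_measurable lebesgue" and w: "w \<in> borel_measurable lebesgue"
  obtains u' w' where "u' \<in> borel_measurable borel" "w' \<in> borel_measurable borel"
    "AE z in lborel. u z = u' z" "AE z in lborel. w z = w' z"
    "\<And>x. (\<integral>\<^sup>+y. u (x - y) * w y \<partial>lebesgue) = (\<integral>\<^sup>+y. u' (x - y) * w' y \<partial>lborel)"
proof -
  obtain u' where u': "u' \<in> borel_measurable lborel" "AE z in lborel. u z = u' z"
    using completion_ex_borel_measurable[OF u] by blast
  obtain w' where w': "w' \<in> borel_measurable lborel" "AE z in lborel. w z = w' z"
    using completion_ex_borel_measurable[OF w] by blast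
  have "(\<integral>\<^sup>+y. u (x - y) * w y \<partial>lebesgue) = (\<integral>\<^sup>+y. u' (x - y) * w' y \<partial>lborel)" for x
  proof -
    have "AE y in lebesgue. u (x - y) = u' (x - y)"
      by (rule AE_reflect) (use u'(2) in \<open>simp add: AE_completion_iff\<close>)
    moreover have "AE y in lebesgue. w y = w' y"
      using w'(2) by (simp add: AE_completion_iff)
    ultimately have "(\<integral>\<^sup>+y. u (x - y) * w y \<partial>lebesgue) = (\<integral>\<^sup>+y. u' (x - y) * w' y \<partial>lebesgue)"
      by (intro nn_integral_cong_AE) auto
    then show ?thesis by (simp add: nn_integral_completion)
  qed
  then show thesis
    using that u' w' by (simp add: measurable_lborel1)
qed

text \<open>Nonnegative convolution of Lebesgue measurable functions is again Lebesgue
  measurable, and by Tonelli's theorem and translation invariance its integral is the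
  product of the integrals.\<close>
lemma
  fixes u w :: "'a::euclidean_space \<Rightarrow> ennreal"
  assumes u: "u \<in> borel_measurable lebesgue" and w: "w \<in> borel_measurable lebesgue"
  shows nn_conv_measurable:
      "(\<lambda>x. \<integral>\<^sup>+y. u (x - y) * w y \<partial>lebesgue) \<in> borel_measurable lebesgue"
    and nn_conv_integral:
      "(\<integral>\<^sup>+x. (\<integral>\<^sup>+y. u (x - y) * w y \<partial>lebesgue) \<partial>lebesgue)
         = (\<integral>\<^sup>+x. u x \<partial>lebesgue) * (\<integral>\<^sup>+y. w y \<partial>lebesgue)"
proof -
  obtain u' w' where [measurable]: "u' \<in> borel_measurable borel" "w' \<in> borel_measurable borel"
    and ae: "AE z in lborel. u z = u' z" "AE z in lborel. w z = w' z"
    and inner: "\<And>x. (\<integral>\<^sup>+y. u (x - y) * w y \<partial>lebesgue) = (\<integral>\<^sup>+y. u' (x - y) * w' y \<partial>lborel)"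
    using nn_conv_borel_representatives[OF u w] by blast
  have "(\<lambda>x. \<integral>\<^sup>+y. u' (x - y) * w' y \<partial>lborel) \<in> borel_measurable lborel"
    by measurable
  then show "(\<lambda>x. \<integral>\<^sup>+y. u (x - y) * w y \<partial>lebesgue) \<in> borel_measurable lebesgue"
    unfolding inner by (rule measurable_completion)
  have translate: "(\<integral>\<^sup>+x. u' (x - y) \<partial>lborel) = (\<integral>\<^sup>+x. u' x \<partial>lborel)" for y
    using nn_integral_distr[of "(+) (-y)" lborel borel u'] by (simp add: lborel_distr_plus)
  have "(\<integral>\<^sup>+x. (\<integral>\<^sup>+y. u (x - y) * w y \<partial>lebesgue) \<partial>lebesgue)
      = (\<integral>\<^sup>+x. (\<integral>\<^sup>+y. u' (x - y) * w' y \<partial>lborel) \<partial>lborel)"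
    unfolding inner by (simp add: nn_integral_completion)
  also have "\<dots> = (\<integral>\<^sup>+y. (\<integral>\<^sup>+x. u' (x - y) * w' y \<partial>lborel) \<partial>lborel)"
    by (rule lborel_pair.Fubini'[symmetric]) measurable
  also have "\<dots> = (\<integral>\<^sup>+y. (\<integral>\<^sup>+x. u' x \<partial>lborel) * w' y \<partial>lborel)"
    by (subst nn_integral_multc) (auto simp: translate)
  also have "\<dots> = (\<integral>\<^sup>+x. u' x \<partial>lborel) * (\<integral>\<^sup>+y. w' y \<partial>lborel)"
    by (subst nn_integral_cmult) (auto simp: mult.commute)
  also have "\<dots> = (\<integral>\<^sup>+x. u x \<partial>lebesgue) * (\<integral>\<^sup>+y. w y \<partial>lebesgue)"
    using ae by (simp add: nn_integral_completion nn_integral_cong_AE)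
  finally show "(\<integral>\<^sup>+x. (\<integral>\<^sup>+y. u (x - y) * w y \<partial>lebesgue) \<partial>lebesgue)
      = (\<integral>\<^sup>+x. u x \<partial>lebesgue) * (\<integral>\<^sup>+y. w y \<partial>lebesgue)" .
qed

text \<open>Three-term weighted AM--GM inequality, obtained from the two-term version
  (\<open>Youngs_inequality_0\<close>) applied twice.\<close>
lemma weighted_am_gm3:
  fixes X Y Z \<alpha> \<beta> \<gamma> :: real
  assumes "X > 0" "Y > 0" "Z > 0" "\<alpha> \<ge> 0" "\<beta> \<ge> 0" "\<gamma> \<ge> 0" "\<alpha> + \<beta> + \<gamma> = 1"
  shows "X powr \<alpha> * Y powr \<beta> * Z powr \<gamma> \<le> \<alpha> * X + \<beta> * Y + \<gamma> * Z"
proof (cases "\<beta> + \<gamma> = 0")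
  case True
  then have b: "\<beta> = 0" "\<gamma> = 0" "\<alpha> = 1" using assms by linarith+
  show ?thesis using assms unfolding b by simp
next
  case False
  define s where "s = \<beta> + \<gamma>"
  have s: "s > 0" using False assms s_def by linarith
  define W where "W = Y powr (\<beta>/s) * Z powr (\<gamma>/s)"
  have W: "W > 0" using assms by (simp add: W_def)
  have "W \<le> (\<beta>/s) * Y + (\<gamma>/s) * Z"
    unfolding W_def using assms s s_def
    by (intro Youngs_inequality_0) (auto simp: add_divide_distrib[symmetric])
  have "W powr s = Y powr \<beta> * Z powr \<gamma>"
    using assms s by (simp add: W_def powr_mult powr_powr)
  have "X powr \<alpha> * W powr s \<le> \<alpha> * X + s * W"
    using assms s W s_def by (intro Youngs_inequality_0) auto
  also have "s * W \<le> s * ((\<beta>/s) * Y + (\<gamma>/s) * Z)"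
    using \<open>W \<le> _\<close> s by (intro mult_left_mono) auto
  also have "\<dots> = \<beta> * Y + \<gamma> * Z" using s by (simp add: field_simps)
  finally show ?thesis using \<open>W powr s = _\<close> by (simp add: mult.assoc)
qed

text \<open>The key pointwise inequality behind Young's convolution inequality: with
  \<open>\<alpha> = 1/R\<close>, \<open>\<beta> = 1/P - 1/R\<close>, \<open>\<gamma> = 1/Q - 1/R\<close> the product \<open>s t\<close> is split as
  \<open>(s\<^sup>P t\<^sup>Q)\<^sup>\<alpha> (s\<^sup>P)\<^sup>\<beta> (t\<^sup>Q)\<^sup>\<gamma>\<close>, and each factor is normalised by a constant
  \<open>K\<close>, \<open>A\<close>, \<open>B\<close> before applying AM--GM.\<close>
lemma young_three_terms:
  fixes s t K A B \<alpha> \<beta> \<gamma> P Q :: real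
  assumes st: "s \<ge> 0" "t \<ge> 0" and pos: "K > 0" "A > 0" "B > 0"
    and w: "\<alpha> \<ge> 0" "\<beta> \<ge> 0" "\<gamma> \<ge> 0" "\<alpha> + \<beta> + \<gamma> = 1"
    and PQ: "P > 0" "Q > 0" "P * (\<alpha> + \<beta>) = 1" "Q * (\<alpha> + \<gamma>) = 1"
  defines "c \<equiv> K powr \<alpha> * A powr \<beta> * B powr \<gamma>"
  shows "s * t \<le> c * \<alpha> / K * (s powr P * t powr Q) + c * \<beta> / A * s powr P + c * \<gamma> / B * t powr Q"
proof (cases "s = 0 \<or> t = 0")
  case True
  have "0 \<le> c * \<alpha> / K * (s powr P * t powr Q) + c * \<beta> / A * s powr P + c * \<gamma> / B * t powr Q"
    using assms by (intro add_nonneg_nonneg mult_nonneg_nonneg divide_nonneg_pos) auto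
  then show ?thesis using True by auto
next
  case False
  then have s: "s > 0" and t: "t > 0" using st by auto
  have c: "c > 0" using pos by (simp add: c_def)
  define X where "X = s powr P * t powr Q / K"
  define Y where "Y = s powr P / A"
  define Z where "Z = t powr Q / B"
  have XYZ: "X > 0" "Y > 0" "Z > 0" using s t pos by (auto simp: X_def Y_def Z_def)
  have "X powr \<alpha> * Y powr \<beta> * Z powr \<gamma>
      = s powr (P * \<alpha> + P * \<beta>) * t powr (Q * \<alpha> + Q * \<gamma>) / c"
    using s t pos
    by (simp add: X_def Y_def Z_def c_def powr_divide powr_mult powr_powr powr_add field_simps)
  also have "\<dots> = s * t / c" using PQ s t by (simp add: distrib_left[symmetric])
  finally have "s * t / c \<le> \<alpha> * X + \<beta> * Y + \<gamma> * Z"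
    using weighted_am_gm3[OF XYZ w] by simp
  then show ?thesis
    using c by (simp add: X_def Y_def Z_def field_simps)
qed

lemma nn_conv_pointwise_bound:
  fixes F G :: "'a::euclidean_space \<Rightarrow> real" and x :: 'a
  assumes Fm: "F \<in> borel_measurable lebesgue" and Gm: "G \<in> borel_measurable lebesgue"
    and F0: "\<And>z. F z \<ge> 0" and G0: "\<And>z. G z \<ge> 0"
    and w: "\<alpha> \<ge> 0" "\<beta> \<ge> 0" "\<gamma> \<ge> 0" "\<alpha> + \<beta> + \<gamma> = 1"
    and PQ: "P > 0" "Q > 0" "P * (\<alpha> + \<beta>) = 1" "Q * (\<alpha> + \<gamma>) = 1"
    and pos: "a > 0" "b > 0" "k > 0"
    and IA: "(\<integral>\<^sup>+z. ennreal (F z powr P) \<partial>lebesgue) = ennreal a"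
    and IB: "(\<integral>\<^sup>+z. ennreal (G z powr Q) \<partial>lebesgue) = ennreal b"
    and IK: "\<alpha> = 0 \<or> (\<integral>\<^sup>+y. ennreal (F (x - y) powr P * G y powr Q) \<partial>lebesgue) \<le> ennreal k"
  shows "(\<integral>\<^sup>+y. ennreal (F (x - y) * G y) \<partial>lebesgue) \<le> ennreal (k powr \<alpha> * a powr \<beta> * b powr \<gamma>)"
proof -
  define c where "c = k powr \<alpha> * a powr \<beta> * b powr \<gamma>"
  have c: "c > 0" using pos by (simp add: c_def)
  have [measurable]: "(\<lambda>y. F (x - y)) \<in> borel_measurable lebesgue" "F \<in> borel_measurable lebesgue"
    "G \<in> borel_measurable lebesgue"
    using measurable_reflect[OF Fm] Fm Gm by auto
  have splitting: "ennreal (F (x - y) * G y) \<le>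
      ennreal (c * \<alpha> / k) * ennreal (F (x - y) powr P * G y powr Q)
      + ennreal (c * \<beta> / a) * ennreal (F (x - y) powr P) + ennreal (c * \<gamma> / b) * ennreal (G y powr Q)" for y
  proof -
    have "F (x - y) * G y \<le> c * \<alpha> / k * (F (x - y) powr P * G y powr Q) + c * \<beta> / a * F (x - y) powr P
        + c * \<gamma> / b * G y powr Q"
      unfolding c_def by (rule young_three_terms) (use F0 G0 w PQ pos in auto)
    then show ?thesis
      using c w pos by (simp add: ennreal_leI flip: ennreal_plus ennreal_mult)
  qed
  have IA_reflected: "(\<integral>\<^sup>+y. ennreal (F (x - y) powr P) \<partial>lebesgue) = ennreal a"
    using nn_integral_reflect[of "\<lambda>z. ennreal (F z powr P)" x] IA by simp
  have mixed_term: "ennreal (c * \<alpha> / k) * (\<integral>\<^sup>+y. ennreal (F (x - y) powr P * G y powr Q) \<partial>lebesgue)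
      \<le> ennreal (c * \<alpha>)"
  proof (cases "\<alpha> = 0")
    case True then show ?thesis by simp
  next
    case False
    then have "ennreal (c * \<alpha> / k) * (\<integral>\<^sup>+y. ennreal (F (x - y) powr P * G y powr Q) \<partial>lebesgue)
        \<le> ennreal (c * \<alpha> / k) * ennreal k"
      using IK by (intro mult_left_mono) auto
    also have "\<dots> = ennreal (c * \<alpha>)"
      using c w pos by (simp add: ennreal_mult[symmetric])
    finally show ?thesis .
  qed
  have "(\<integral>\<^sup>+y. ennreal (F (x - y) * G y) \<partial>lebesgue) \<le>
     (\<integral>\<^sup>+y. ennreal (c * \<alpha> / k) * ennreal (F (x - y) powr P * G y powr Q)
      + ennreal (c * \<beta> / a) * ennreal (F (x - y) powr P) + ennreal (c * \<gamma> / b) * ennreal (G y powr Q) \<partial>lebesgue)"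
    by (intro nn_integral_mono splitting)
  also have "\<dots> = ennreal (c * \<alpha> / k) * (\<integral>\<^sup>+y. ennreal (F (x - y) powr P * G y powr Q) \<partial>lebesgue)
      + ennreal (c * \<beta> / a) * (\<integral>\<^sup>+y. ennreal (F (x - y) powr P) \<partial>lebesgue)
      + ennreal (c * \<gamma> / b) * (\<integral>\<^sup>+y. ennreal (G y powr Q) \<partial>lebesgue)"
    by (simp add: nn_integral_add nn_integral_cmult)
  also have "\<dots> \<le> ennreal (c * \<alpha>) + ennreal (c * \<beta>) + ennreal (c * \<gamma>)"
    using mixed_term c pos w by (auto simp: IA_reflected IB ennreal_mult[symmetric] intro!: add_mono)
  also have "\<dots> = ennreal c"
    using c w by (simp add: ennreal_plus[symmetric] distrib_left[symmetric] del: ennreal_plus)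
  finally show ?thesis by (simp add: c_def)
qed

text \<open>Balls of positive radius have positive Lebesgue measure; this makes the
  essential supremum see values of continuous functions.\<close>
lemma ball_measure_pos:
  fixes c :: "'a::euclidean_space"
  assumes "e > 0" shows "measure lebesgue (ball c e) > 0"
proof -
  have "measure lebesgue (ball c e) = measure lborel (ball c e)"
    by (intro measure_completion) simp
  then show ?thesis using content_ball_pos[OF assms, of c] by simp
qed

lemma Lp_top_upper:
  assumes "\<And>x. ennreal (cmod (f x)) \<le> c"
  shows "Lp_norm top f \<le> c"
  unfolding Lp_norm_def using assms by (auto intro: Inf_lower)

lemma Lp_top_AE:
  fixes f :: "'a::euclidean_space \<Rightarrow> complex"
  shows "AE x in lebesgue. ennreal (cmod (f x)) \<le> Lp_norm top f"
proof -
  define A where "A = {c. AE x in lebesgue. ennreal (cmod (f x)) \<le> c}"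
  have "top \<in> A" by (simp add: A_def)
  then obtain u where u: "\<And>n. u n \<in> A" "u \<longlonglongrightarrow> Inf A"
    using Inf_as_limit[of A] by blast
  have "AE x in lebesgue. \<forall>n. ennreal (cmod (f x)) \<le> u n"
    using u(1) by (simp add: A_def AE_all_countable)
  then have "AE x in lebesgue. ennreal (cmod (f x)) \<le> Inf A"
    by (rule eventually_mono) (auto intro: LIMSEQ_le_const[OF u(2)])
  then show ?thesis by (simp add: A_def Lp_norm_def)
qed

lemma Lp_top_lower:
  fixes f :: "'a::euclidean_space \<Rightarrow> complex"
  assumes e: "e > 0" and lb: "\<And>z. z \<in> ball c e \<Longrightarrow> d \<le> cmod (f z)"
  shows "ennreal d \<le> Lp_norm top f"
  unfolding Lp_norm_def
proof (simp, rule Inf_greatest, safe)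
  fix c' assume AE: "AE x in lebesgue. ennreal (cmod (f x)) \<le> c'"
  show "ennreal d \<le> c'"
  proof (rule ccontr)
    assume "\<not> ennreal d \<le> c'"
    then have lt: "c' < ennreal d" by simp
    have "AE z in lebesgue. z \<notin> ball c e"
      using AE
    proof (rule eventually_mono)
      fix z assume le: "ennreal (cmod (f z)) \<le> c'"
      show "z \<notin> ball c e"
      proof
        assume "z \<in> ball c e"
        then have "ennreal d \<le> ennreal (cmod (f z))" using lb by (intro ennreal_leI) auto
        then show False using le lt by (meson order.trans leD)
      qed
    qed
    then have "emeasure lebesgue (ball c e) = 0"
      by (subst (asm) AE_iff_measurable[OF lmeasurable_ball[THEN fmeasurableD]]) auto
    then show False using ball_measure_pos[OF e, of c] by (simp add: emeasure_eq_measure2)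
  qed
qed

lemma Lp_norm_of_zero: "Lp_norm r (\<lambda>x. 0 :: complex) = 0"
proof (cases "r = top")
  case True then show ?thesis using Lp_top_upper[of "\<lambda>x. 0" 0] by simp
next
  case False
  have "(\<lambda>x. ennreal (cmod (0::complex) powr enn2real r)) = (\<lambda>x. 0)" by simp
  then show ?thesis using False unfolding Lp_norm_def by (simp add: Let_def)
qed

lemma Lp_one: "Lp_norm 1 f = (\<integral>\<^sup>+x. ennreal (cmod (f x)) \<partial>lebesgue)"
proof -
  define I where "I = (\<integral>\<^sup>+x. ennreal (cmod (f x)) \<partial>lebesgue)"
  have eq: "(\<integral>\<^sup>+x. ennreal (cmod (f x) powr enn2real 1) \<partial>lebesgue) = I" by (simp add: I_def)
  have "Lp_norm 1 f = (if I = top then top else ennreal (enn2real I powr (1 / enn2real 1)))"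
    unfolding Lp_norm_def Let_def eq by simp
  also have "\<dots> = I" by (cases I) auto
  finally show ?thesis by (simp add: I_def)
qed

lemma Lp_norm_finite:
  assumes "p \<noteq> top" "Lp_norm p f \<noteq> top"
  obtains a where "a \<ge> 0" "(\<integral>\<^sup>+x. ennreal (cmod (f x) powr enn2real p) \<partial>lebesgue) = ennreal a"
    "Lp_norm p f = ennreal (a powr (1 / enn2real p))"
proof -
  define I where "I = (\<integral>\<^sup>+x. ennreal (cmod (f x) powr enn2real p) \<partial>lebesgue)"
  have L: "Lp_norm p f = (if I = top then top else ennreal (enn2real I powr (1 / enn2real p)))"
    using assms(1) unfolding Lp_norm_def Let_def I_def by simp
  have "I \<noteq> top" using assms(2) L by auto
  then have "I = ennreal (enn2real I)" by (cases I) auto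
  moreover have "Lp_norm p f = ennreal (enn2real I powr (1 / enn2real p))"
    using L \<open>I \<noteq> top\<close> by simp
  ultimately show ?thesis using that[of "enn2real I"] unfolding I_def by simp
qed

lemma Lp_norm_finite_pos:
  assumes "p = ennreal P" "0 < P" "Lp_norm p f \<noteq> 0" "Lp_norm p f \<noteq> top"
  obtains a where "0 < a" "(\<integral>\<^sup>+x. ennreal (cmod (f x) powr P) \<partial>lebesgue) = ennreal a"
    "Lp_norm p f = ennreal (a powr (1 / P))"
proof -
  obtain a where a: "0 \<le> a" "(\<integral>\<^sup>+x. ennreal (cmod (f x) powr enn2real p) \<partial>lebesgue) = ennreal a"
    "Lp_norm p f = ennreal (a powr (1 / enn2real p))"
    using Lp_norm_finite[of p f] assms(1,4) by auto
  moreover have "a \<noteq> 0" using a assms(3) by auto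
  ultimately show ?thesis using that[of a] assms(1,2) by simp
qed

lemma Lp_norm_finite_upper:
  assumes "p \<noteq> top" "enn2real p > 0" "T \<ge> 0"
    and "(\<integral>\<^sup>+x. ennreal (cmod (f x) powr enn2real p) \<partial>lebesgue) \<le> ennreal (T powr enn2real p)"
  shows "Lp_norm p f \<le> ennreal T"
proof -
  define I where "I = (\<integral>\<^sup>+x. ennreal (cmod (f x) powr enn2real p) \<partial>lebesgue)"
  have "I \<noteq> top" using assms(4) unfolding I_def by (auto simp: top_unique)
  have "enn2real I \<le> T powr enn2real p"
    using assms(4) unfolding I_def by (intro enn2real_leI) auto
  then have "enn2real I powr (1 / enn2real p) \<le> (T powr enn2real p) powr (1 / enn2real p)"
    by (intro powr_mono2) auto
  also have "\<dots> = T" using assms by (simp add: powr_powr)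
  finally have le: "enn2real I powr (1 / enn2real p) \<le> T" .
  have "Lp_norm p f = ennreal (enn2real I powr (1 / enn2real p))"
    using assms(1) \<open>I \<noteq> top\<close> unfolding Lp_norm_def I_def Let_def by simp
  then show ?thesis using le by (simp add: ennreal_leI)
qed

lemma Lp_norm_zero_AE:
  fixes f :: "'a::euclidean_space \<Rightarrow> complex"
  assumes zero: "Lp_norm p f = 0" and f: "f \<in> borel_measurable lebesgue"
  shows "AE x in lebesgue. f x = 0"
proof (cases "p = top")
  case True
  have "AE x in lebesgue. ennreal (cmod (f x)) \<le> 0" using Lp_top_AE[of f] zero True by simp
  then show ?thesis by (rule eventually_mono) simp
next
  case False
  then obtain a where a: "(\<integral>\<^sup>+x. ennreal (cmod (f x) powr enn2real p) \<partial>lebesgue) = ennreal a"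
    "Lp_norm p f = ennreal (a powr (1 / enn2real p))" "0 \<le> a"
    using Lp_norm_finite[of p f] zero by auto
  then have "a = 0" using zero by (simp add: order.antisym)
  moreover have "(\<lambda>x. ennreal (cmod (f x) powr enn2real p)) \<in> borel_measurable lebesgue"
    using f by measurable
  ultimately have "AE x in lebesgue. ennreal (cmod (f x) powr enn2real p) = 0"
    using a(1) by (simp add: nn_integral_0_iff_AE)
  then show ?thesis by (rule eventually_mono) simp
qed

lemma exponent_reciprocal:
  fixes p :: ennreal
  assumes "1 \<le> p"
  obtains s where "inverse p = ennreal s" "0 \<le> s" "s \<le> 1" "p = top \<longleftrightarrow> s = 0"
    "s \<noteq> 0 \<Longrightarrow> p = ennreal (1 / s)"
proof (cases "p = top")
  case True
  then show ?thesis by (intro that[of 0]) auto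
next
  case False
  then obtain P where P: "p = ennreal P" "0 \<le> P" by (cases p) auto
  then have "1 \<le> P" using assms by (simp add: ennreal_1[symmetric] del: ennreal_1)
  then show ?thesis
    using P by (intro that[of "1 / P"]) (auto simp: inverse_ennreal divide_inverse inverse_le_1_iff)
qed

lemma young_exponent_cases:
  fixes p q r :: ennreal
  assumes "1 \<le> p" "1 \<le> q" "1 \<le> r" "1 + inverse r = inverse p + inverse q"
  obtains (sup_one) "r = top" "p = top" "q = 1"
    | (one_sup) "r = top" "p = 1" "q = top"
    | (conjugate) P Q where "r = top" "p = ennreal P" "q = ennreal Q" "1 \<le> P" "1 \<le> Q"
        "1 / P + 1 / Q = 1"
    | (finite) P Q R where "r = ennreal R" "p = ennreal P" "q = ennreal Q" "1 \<le> P" "1 \<le> Q"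
        "1 \<le> R" "1 + 1 / R = 1 / P + 1 / Q"
proof -
  obtain sp where sp: "inverse p = ennreal sp" "0 \<le> sp" "sp \<le> 1" "p = top \<longleftrightarrow> sp = 0"
    "sp \<noteq> 0 \<Longrightarrow> p = ennreal (1 / sp)"
    using exponent_reciprocal[OF assms(1)] by blast
  obtain sq where sq: "inverse q = ennreal sq" "0 \<le> sq" "sq \<le> 1" "q = top \<longleftrightarrow> sq = 0"
    "sq \<noteq> 0 \<Longrightarrow> q = ennreal (1 / sq)"
    using exponent_reciprocal[OF assms(2)] by blast
  obtain sr where sr: "inverse r = ennreal sr" "0 \<le> sr" "sr \<le> 1" "r = top \<longleftrightarrow> sr = 0"
    "sr \<noteq> 0 \<Longrightarrow> r = ennreal (1 / sr)"
    using exponent_reciprocal[OF assms(3)] by blast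
  have "ennreal (1 + sr) = ennreal (sp + sq)"
    using assms(4) sp sq sr by (simp add: ennreal_plus)
  then have rel: "1 + sr = sp + sq"
    using sp sq sr by (subst (asm) ennreal_inj) auto
  consider "sr = 0" "sp = 0" | "sr = 0" "sq = 0" | "sr = 0" "sp \<noteq> 0" "sq \<noteq> 0" | "sr \<noteq> 0"
    by blast
  then show ?thesis
  proof cases
    case 1
    then show ?thesis using rel sp sq sr by (intro sup_one) auto
  next
    case 2
    then show ?thesis using rel sp sq sr by (intro one_sup) auto
  next
    case 3
    then show ?thesis
      using rel sp sq sr by (intro conjugate[of "1 / sp" "1 / sq"]) auto
  next
    case 4
    then have "sp \<noteq> 0" "sq \<noteq> 0" using rel sp sq sr by auto
    then show ?thesis
      using 4 rel sp sq sr by (intro finite[of "1 / sr" "1 / sp" "1 / sq"]) auto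
  qed
qed

lemma young_weights:
  fixes P Q R :: real
  assumes "1 \<le> P" "1 \<le> Q" "1 \<le> R" "1 + 1/R = 1/P + 1/Q"
  shows "0 \<le> 1/P - 1/R" "0 \<le> 1/Q - 1/R" "1/R + (1/P - 1/R) + (1/Q - 1/R) = 1"
    "P * (1/R + (1/P - 1/R)) = 1" "Q * (1/R + (1/Q - 1/R)) = 1"
proof -
  have "1 / Q \<le> 1" "1 / P \<le> 1" using assms by auto
  then show "0 \<le> 1/P - 1/R" "0 \<le> 1/Q - 1/R" using assms(4) by linarith+
  show "1/R + (1/P - 1/R) + (1/Q - 1/R) = 1" using assms(4) by linarith
  show "P * (1/R + (1/P - 1/R)) = 1" "Q * (1/R + (1/Q - 1/R)) = 1" using assms by auto
qed

lemma nn_conv_zero_of_powers: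
  fixes F G :: "'a::euclidean_space \<Rightarrow> real"
  assumes Fm: "F \<in> borel_measurable lebesgue" and Gm: "G \<in> borel_measurable lebesgue"
    and zero: "(\<integral>\<^sup>+y. ennreal (F (x - y) powr P * G y powr Q) \<partial>lebesgue) = 0"
  shows "(\<integral>\<^sup>+y. ennreal (F (x - y) * G y) \<partial>lebesgue) = 0"
proof -
  have "(\<lambda>y. ennreal (F (x - y) powr P * G y powr Q)) \<in> borel_measurable lebesgue"
    using measurable_reflect[OF Fm, of x] Gm by measurable
  then have "AE y in lebesgue. ennreal (F (x - y) powr P * G y powr Q) = 0"
    using zero by (simp add: nn_integral_0_iff_AE)
  moreover have "ennreal (F (x - y) * G y) = 0"
    if "ennreal (F (x - y) powr P * G y powr Q) = 0" for y
  proof -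
    have "F (x - y) powr P * G y powr Q = 0"
      using that by (intro order.antisym) (auto simp: ennreal_eq_0_iff)
    then show ?thesis by auto
  qed
  ultimately have "AE y in lebesgue. ennreal (F (x - y) * G y) = 0"
    by (auto elim!: eventually_mono)
  from nn_integral_cong_AE[OF this] show ?thesis by simp
qed

lemma young_pointwise:
  fixes F G :: "'a::euclidean_space \<Rightarrow> real" and H :: "'a \<Rightarrow> complex"
  assumes Fm: "F \<in> borel_measurable lebesgue" and Gm: "G \<in> borel_measurable lebesgue"
    and F0: "\<And>z. F z \<ge> 0" and G0: "\<And>z. G z \<ge> 0" and C0: "C0 > 0"
    and dom: "\<And>x. ennreal (cmod (H x)) \<le> ennreal C0 * (\<integral>\<^sup>+y. ennreal (F (x - y) * G y) \<partial>lebesgue)"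
    and PQR: "1 \<le> P" "1 \<le> Q" "1 \<le> R" "1 + 1/R = 1/P + 1/Q"
    and pos: "a > 0" "b > 0"
    and IA: "(\<integral>\<^sup>+z. ennreal (F z powr P) \<partial>lebesgue) = ennreal a"
    and IB: "(\<integral>\<^sup>+z. ennreal (G z powr Q) \<partial>lebesgue) = ennreal b"
  shows "ennreal (cmod (H x) powr R)
    \<le> ennreal (C0 powr R * a powr (R/P - 1) * b powr (R/Q - 1))
        * (\<integral>\<^sup>+y. ennreal (F (x - y) powr P * G y powr Q) \<partial>lebesgue)"
    (is "_ \<le> ennreal ?c * ?K")
proof -
  have c: "?c > 0" using C0 pos by simp
  consider "?K = top" | "?K = 0" | k where "?K = ennreal k" "k > 0"
    by (cases ?K) (auto simp: ennreal_eq_0_iff less_le)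
  then show ?thesis
  proof cases
    case 1
    then show ?thesis using C0 pos by (simp add: ennreal_mult_top)
  next
    case 2
    then have "H x = 0"
      using dom[of x] nn_conv_zero_of_powers[OF Fm Gm] by simp
    then show ?thesis by simp
  next
    case (3 k)
    define M where "M = C0 * (k powr (1/R) * a powr (1/P - 1/R) * b powr (1/Q - 1/R))"
    have "ennreal (cmod (H x)) \<le> ennreal C0 * (\<integral>\<^sup>+y. ennreal (F (x - y) * G y) \<partial>lebesgue)"
      by (rule dom)
    also have "\<dots> \<le> ennreal C0 * ennreal (k powr (1/R) * a powr (1/P - 1/R) * b powr (1/Q - 1/R))"
      using young_weights[OF PQR] PQR 3
      by (intro mult_left_mono nn_conv_pointwise_bound[OF Fm Gm F0 G0 _ _ _ _ _ _ _ _ pos \<open>k > 0\<close> IA IB])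
        auto
    also have "\<dots> = ennreal M" using C0 by (simp add: M_def ennreal_mult)
    finally have "cmod (H x) \<le> M" using C0 pos \<open>k > 0\<close> by (simp add: M_def)
    then have "cmod (H x) powr R \<le> M powr R" using PQR by (intro powr_mono2) auto
    also have "\<dots> = ?c * k"
      using C0 pos \<open>k > 0\<close> PQR
      by (simp add: M_def powr_mult powr_powr mult.commute right_diff_distrib)
    finally have "ennreal (cmod (H x) powr R) \<le> ennreal ?c * ennreal k"
      using c \<open>k > 0\<close> by (simp add: ennreal_leI flip: ennreal_mult)
    then show ?thesis using 3 by simp
  qed
qed

text \<open>Integrating the pointwise bound with Tonelli (\<open>\<integral>\<integral>F(x-y)\<^sup>P G(y)\<^sup>Q = a b\<close>) gives
  Young's inequality \<open>\<integral>|H|\<^sup>R \<le> (C\<^sub>0 a\<^sup>1\<^sup>/\<^sup>P b\<^sup>1\<^sup>/\<^sup>Q)\<^sup>R\<close>.\<close>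
lemma young_integral:
  fixes F G :: "'a::euclidean_space \<Rightarrow> real" and H :: "'a \<Rightarrow> complex"
  assumes Fm: "F \<in> borel_measurable lebesgue" and Gm: "G \<in> borel_measurable lebesgue"
    and F0: "\<And>z. F z \<ge> 0" and G0: "\<And>z. G z \<ge> 0" and C0: "C0 > 0"
    and dom: "\<And>x. ennreal (cmod (H x)) \<le> ennreal C0 * (\<integral>\<^sup>+y. ennreal (F (x - y) * G y) \<partial>lebesgue)"
    and PQR: "1 \<le> P" "1 \<le> Q" "1 \<le> R" "1 + 1/R = 1/P + 1/Q"
    and pos: "a > 0" "b > 0"
    and IA: "(\<integral>\<^sup>+z. ennreal (F z powr P) \<partial>lebesgue) = ennreal a"
    and IB: "(\<integral>\<^sup>+z. ennreal (G z powr Q) \<partial>lebesgue) = ennreal b"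
  shows "(\<integral>\<^sup>+x. ennreal (cmod (H x) powr R) \<partial>lebesgue)
    \<le> ennreal ((C0 * a powr (1/P) * b powr (1/Q)) powr R)"
proof -
  define c where "c = C0 powr R * a powr (R/P - 1) * b powr (R/Q - 1)"
  have c: "c > 0" using C0 pos by (simp add: c_def)
  have [measurable]: "F \<in> borel_measurable lebesgue" "G \<in> borel_measurable lebesgue"
    using Fm Gm by auto
  have tonelli: "(\<integral>\<^sup>+x. (\<integral>\<^sup>+y. ennreal (F (x - y) powr P * G y powr Q) \<partial>lebesgue) \<partial>lebesgue)
      = ennreal a * ennreal b"
    using nn_conv_integral[of "\<lambda>z. ennreal (F z powr P)" "\<lambda>z. ennreal (G z powr Q)"] IA IB
    by (simp add: ennreal_mult)
  have conv_measurable: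
    "(\<lambda>x. \<integral>\<^sup>+y. ennreal (F (x - y) powr P * G y powr Q) \<partial>lebesgue) \<in> borel_measurable lebesgue"
    using nn_conv_measurable[of "\<lambda>z. ennreal (F z powr P)" "\<lambda>z. ennreal (G z powr Q)"]
    by (simp add: ennreal_mult)
  have "(\<integral>\<^sup>+x. ennreal (cmod (H x) powr R) \<partial>lebesgue)
      \<le> (\<integral>\<^sup>+x. ennreal c * (\<integral>\<^sup>+y. ennreal (F (x - y) powr P * G y powr Q) \<partial>lebesgue) \<partial>lebesgue)"
    unfolding c_def by (intro nn_integral_mono young_pointwise[OF assms])
  also have "\<dots> = ennreal c * (ennreal a * ennreal b)"
    using conv_measurable by (simp add: nn_integral_cmult tonelli)
  also have "\<dots> = ennreal (c * a * b)" using c pos by (simp add: ennreal_mult mult.assoc)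
  also have "c * a * b = (C0 * a powr (1/P) * b powr (1/Q)) powr R"
    using C0 pos PQR
    by (simp add: c_def powr_mult powr_powr powr_diff mult.commute)
  finally show ?thesis .
qed

lemma nn_conv_sup_one:
  fixes f g :: "'a::euclidean_space \<Rightarrow> complex"
  assumes "g \<in> borel_measurable lebesgue"
  shows "(\<integral>\<^sup>+y. ennreal (cmod (f (x - y)) * cmod (g y)) \<partial>lebesgue) \<le> Lp_norm top f * Lp_norm 1 g"
proof -
  have "AE y in lebesgue. ennreal (cmod (f (x - y))) \<le> Lp_norm top f"
    by (rule AE_reflect) (rule Lp_top_AE)
  then have "(\<integral>\<^sup>+y. ennreal (cmod (f (x - y)) * cmod (g y)) \<partial>lebesgue)
      \<le> (\<integral>\<^sup>+y. Lp_norm top f * ennreal (cmod (g y)) \<partial>lebesgue)"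
    by (intro nn_integral_mono_AE, elim eventually_mono) (simp add: ennreal_mult mult_right_mono)
  also have "\<dots> = Lp_norm top f * Lp_norm 1 g"
    using assms by (simp add: nn_integral_cmult Lp_one)
  finally show ?thesis .
qed

lemma nn_conv_one_sup:
  fixes f g :: "'a::euclidean_space \<Rightarrow> complex"
  assumes "f \<in> borel_measurable lebesgue"
  shows "(\<integral>\<^sup>+y. ennreal (cmod (f (x - y)) * cmod (g y)) \<partial>lebesgue) \<le> Lp_norm 1 f * Lp_norm top g"
proof -
  have "(\<integral>\<^sup>+y. ennreal (cmod (f (x - y)) * cmod (g y)) \<partial>lebesgue)
      \<le> (\<integral>\<^sup>+y. ennreal (cmod (f (x - y))) * Lp_norm top g \<partial>lebesgue)"
    using Lp_top_AE[of g]
    by (intro nn_integral_mono_AE, elim eventually_mono) (simp add: ennreal_mult mult_left_mono)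
  also have "\<dots> = (\<integral>\<^sup>+y. ennreal (cmod (f (x - y))) \<partial>lebesgue) * Lp_norm top g"
    using measurable_reflect[OF assms, of x] by (simp add: nn_integral_multc)
  also have "\<dots> = Lp_norm 1 f * Lp_norm top g"
    using nn_integral_reflect[of "\<lambda>z. ennreal (cmod (f z))" x] assms by (simp add: Lp_one)
  finally show ?thesis .
qed

text \<open>Hoelder's inequality for conjugate finite exponents: the case \<open>\<alpha> = 0\<close> of the
  pointwise three-term bound.\<close>
lemma nn_conv_holder:
  fixes f g :: "'a::euclidean_space \<Rightarrow> complex"
  assumes f: "f \<in> borel_measurable lebesgue" and g: "g \<in> borel_measurable lebesgue"
    and PQ: "1 \<le> P" "1 \<le> Q" "1 / P + 1 / Q = 1"
    and nf: "Lp_norm (ennreal P) f \<noteq> 0" "Lp_norm (ennreal P) f \<noteq> top"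
    and ng: "Lp_norm (ennreal Q) g \<noteq> 0" "Lp_norm (ennreal Q) g \<noteq> top"
  shows "(\<integral>\<^sup>+y. ennreal (cmod (f (x - y)) * cmod (g y)) \<partial>lebesgue)
    \<le> Lp_norm (ennreal P) f * Lp_norm (ennreal Q) g"
proof -
  obtain a where a: "a > 0" "(\<integral>\<^sup>+z. ennreal (cmod (f z) powr P) \<partial>lebesgue) = ennreal a"
    "Lp_norm (ennreal P) f = ennreal (a powr (1 / P))"
    using Lp_norm_finite_pos[OF refl _ nf] PQ by auto
  obtain b where b: "b > 0" "(\<integral>\<^sup>+z. ennreal (cmod (g z) powr Q) \<partial>lebesgue) = ennreal b"
    "Lp_norm (ennreal Q) g = ennreal (b powr (1 / Q))"
    using Lp_norm_finite_pos[OF refl _ ng] PQ by auto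
  have "(\<integral>\<^sup>+y. ennreal (cmod (f (x - y)) * cmod (g y)) \<partial>lebesgue)
      \<le> ennreal (1 powr 0 * a powr (1 / P) * b powr (1 / Q))"
    by (rule nn_conv_pointwise_bound[where \<alpha>=0, OF _ _ _ _ _ _ _ _ _ _ _ _ a(1) b(1) _ a(2) b(2)])
      (use f g PQ in auto)
  then show ?thesis using a b by (simp add: ennreal_mult)
qed

lemma nn_conv_vanishes:
  fixes f g :: "'a::euclidean_space \<Rightarrow> complex"
  assumes f: "f \<in> borel_measurable lebesgue" and g: "g \<in> borel_measurable lebesgue"
    and zero: "Lp_norm p f = 0 \<or> Lp_norm q g = 0"
  shows "(\<integral>\<^sup>+y. ennreal (cmod (f (x - y)) * cmod (g y)) \<partial>lebesgue) = 0"
  using zero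
proof
  assume "Lp_norm p f = 0"
  then have "AE z in lebesgue. f z = 0" using Lp_norm_zero_AE f by blast
  then have "AE y in lebesgue. f (x - y) = 0" by (rule AE_reflect)
  then have "AE y in lebesgue. ennreal (cmod (f (x - y)) * cmod (g y)) = 0"
    by (rule eventually_mono) simp
  from nn_integral_cong_AE[OF this] show ?thesis by simp
next
  assume "Lp_norm q g = 0"
  then have "AE z in lebesgue. g z = 0" using Lp_norm_zero_AE g by blast
  then have "AE y in lebesgue. ennreal (cmod (f (x - y)) * cmod (g y)) = 0"
    by (rule eventually_mono) simp
  from nn_integral_cong_AE[OF this] show ?thesis by simp
qed

lemma young_finite_exponents:
  fixes f g H :: "'a::euclidean_space \<Rightarrow> complex"
  assumes f: "f \<in> borel_measurable lebesgue" and g: "g \<in> borel_measurable lebesgue"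
    and C0: "C0 > 0"
    and dom: "\<And>x. ennreal (cmod (H x))
      \<le> ennreal C0 * (\<integral>\<^sup>+y. ennreal (cmod (f (x - y)) * cmod (g y)) \<partial>lebesgue)"
    and PQR: "1 \<le> P" "1 \<le> Q" "1 \<le> R" "1 + 1/R = 1/P + 1/Q"
    and nf: "Lp_norm (ennreal P) f \<noteq> 0" "Lp_norm (ennreal P) f \<noteq> top"
    and ng: "Lp_norm (ennreal Q) g \<noteq> 0" "Lp_norm (ennreal Q) g \<noteq> top"
  shows "Lp_norm (ennreal R) H \<le> ennreal C0 * Lp_norm (ennreal P) f * Lp_norm (ennreal Q) g"
proof -
  obtain a where a: "a > 0" "(\<integral>\<^sup>+z. ennreal (cmod (f z) powr P) \<partial>lebesgue) = ennreal a"
    "Lp_norm (ennreal P) f = ennreal (a powr (1 / P))"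
    using Lp_norm_finite_pos[OF refl _ nf] PQR by auto
  obtain b where b: "b > 0" "(\<integral>\<^sup>+z. ennreal (cmod (g z) powr Q) \<partial>lebesgue) = ennreal b"
    "Lp_norm (ennreal Q) g = ennreal (b powr (1 / Q))"
    using Lp_norm_finite_pos[OF refl _ ng] PQR by auto
  have "(\<integral>\<^sup>+x. ennreal (cmod (H x) powr R) \<partial>lebesgue)
      \<le> ennreal ((C0 * a powr (1/P) * b powr (1/Q)) powr R)"
    by (rule young_integral[where F="\<lambda>z. cmod (f z)" and G="\<lambda>z. cmod (g z)"])
      (use f g C0 dom PQR a b in auto)
  then have "Lp_norm (ennreal R) H \<le> ennreal (C0 * a powr (1/P) * b powr (1/Q))"
    using PQR C0 by (intro Lp_norm_finite_upper) auto
  then show ?thesis using a b C0 by (simp add: ennreal_mult)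
qed

theorem young_dominated:
  fixes f g H :: "'a::euclidean_space \<Rightarrow> complex"
  assumes f: "f \<in> borel_measurable lebesgue" and g: "g \<in> borel_measurable lebesgue"
    and C0: "C0 > 0"
    and dom: "\<And>x. ennreal (cmod (H x))
      \<le> ennreal C0 * (\<integral>\<^sup>+y. ennreal (cmod (f (x - y)) * cmod (g y)) \<partial>lebesgue)"
    and pqr: "1 \<le> p" "1 \<le> q" "1 \<le> r" "1 + inverse r = inverse p + inverse q"
  shows "Lp_norm r H \<le> ennreal C0 * Lp_norm p f * Lp_norm q g"
proof -
  have sup_bound: "Lp_norm top H \<le> ennreal C0 * N"
    if "\<And>x. (\<integral>\<^sup>+y. ennreal (cmod (f (x - y)) * cmod (g y)) \<partial>lebesgue) \<le> N" for N
    using dom that by (intro Lp_top_upper) (meson mult_left_mono order.trans zero_le)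
  consider (zero) "Lp_norm p f = 0 \<or> Lp_norm q g = 0"
    | (infinite) "Lp_norm p f \<noteq> 0" "Lp_norm q g \<noteq> 0" "Lp_norm p f = top \<or> Lp_norm q g = top"
    | (proper) "Lp_norm p f \<noteq> 0" "Lp_norm p f \<noteq> top" "Lp_norm q g \<noteq> 0" "Lp_norm q g \<noteq> top"
    by blast
  then show ?thesis
  proof cases
    case zero
    then have "H = (\<lambda>x. 0)" using dom nn_conv_vanishes[OF f g] by fastforce
    then show ?thesis by (simp add: Lp_norm_of_zero)
  next
    case infinite
    then show ?thesis using C0 by (auto simp: ennreal_mult_eq_top_iff)
  next
    case proper
    from pqr show ?thesis
    proof (cases rule: young_exponent_cases)
      case sup_one
      then show ?thesis using sup_bound[OF nn_conv_sup_one[OF g]] by (simp add: mult.assoc)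
    next
      case one_sup
      then show ?thesis using sup_bound[OF nn_conv_one_sup[OF f]] by (simp add: mult.assoc)
    next
      case (conjugate P Q)
      then show ?thesis
        using sup_bound[OF nn_conv_holder[OF f g]] proper by (simp add: mult.assoc)
    next
      case (finite P Q R)
      then show ?thesis
        using young_finite_exponents[OF f g C0 dom] proper by simp
    qed
  qed
qed

lemma weighted_conv_dominated:
  fixes v :: "'a::euclidean_space \<Rightarrow> real" and f1 f2 :: "'a \<Rightarrow> complex"
  assumes v0: "\<And>x. 0 \<le> v x" and C0: "0 \<le> C0"
    and sub: "\<And>x y. v (x + y) \<le> C0 * v x * v y"
    and m1: "f1 \<in> borel_measurable lebesgue" and m2: "f2 \<in> borel_measurable lebesgue"
    and vm: "v \<in> borel_measurable lebesgue"
  shows "ennreal (cmod (conv f1 f2 x * complex_of_real (v x))) \<le> ennreal C0 *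
    (\<integral>\<^sup>+y. ennreal (cmod (f1 (x - y) * complex_of_real (v (x - y)))
                    * cmod (f2 y * complex_of_real (v y))) \<partial>lebesgue)"
proof (cases "integrable lebesgue (\<lambda>y. f1 (x - y) * f2 y)")
  case False
  then have "conv f1 f2 x = 0" by (simp add: conv_def not_integrable_integral_eq)
  then show ?thesis by simp
next
  case True
  have [measurable]: "(\<lambda>y. f1 (x - y)) \<in> borel_measurable lebesgue"
    "(\<lambda>y. v (x - y)) \<in> borel_measurable lebesgue"
    using measurable_reflect[OF m1] measurable_reflect[OF vm] by auto
  have [measurable]: "f2 \<in> borel_measurable lebesgue" "v \<in> borel_measurable lebesgue"
    using m2 vm by auto
  have pointwise: "ennreal (cmod (f1 (x - y) * f2 y)) * ennreal (v x)
      \<le> ennreal C0 * ennreal (cmod (f1 (x - y) * complex_of_real (v (x - y)))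
                              * cmod (f2 y * complex_of_real (v y)))" for y
  proof -
    have "v x \<le> C0 * v (x - y) * v y" using sub[of "x - y" y] by simp
    then have "cmod (f1 (x - y)) * cmod (f2 y) * v x
        \<le> cmod (f1 (x - y)) * cmod (f2 y) * (C0 * v (x - y) * v y)"
      by (intro mult_left_mono) auto
    then show ?thesis
      using C0 v0 by (simp add: norm_mult abs_of_nonneg ennreal_mult'[symmetric]
          ennreal_mult''[symmetric] ennreal_leI algebra_simps)
  qed
  have "ennreal (cmod (conv f1 f2 x * complex_of_real (v x)))
      = ennreal (cmod (conv f1 f2 x)) * ennreal (v x)"
    using v0 by (simp add: norm_mult ennreal_mult)
  also have "\<dots> \<le> (\<integral>\<^sup>+y. ennreal (cmod (f1 (x - y) * f2 y)) \<partial>lebesgue) * ennreal (v x)"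
    using integral_norm_bound_ennreal[OF True] by (intro mult_right_mono) (auto simp: conv_def)
  also have "\<dots> = (\<integral>\<^sup>+y. ennreal (cmod (f1 (x - y) * f2 y)) * ennreal (v x) \<partial>lebesgue)"
    by (rule nn_integral_multc[symmetric]) measurable
  also have "\<dots> \<le> (\<integral>\<^sup>+y. ennreal C0 * ennreal (cmod (f1 (x - y) * complex_of_real (v (x - y)))
                              * cmod (f2 y * complex_of_real (v y))) \<partial>lebesgue)"
    by (intro nn_integral_mono pointwise)
  also have "\<dots> = ennreal C0 * (\<integral>\<^sup>+y. ennreal (cmod (f1 (x - y) * complex_of_real (v (x - y)))
                              * cmod (f2 y * complex_of_real (v y))) \<partial>lebesgue)"
    by (rule nn_integral_cmult) measurable
  finally show ?thesis .
qed

lemma weighted_young: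
  fixes v :: "'a::euclidean_space \<Rightarrow> real" and f1 f2 :: "'a \<Rightarrow> complex"
  assumes v0: "\<And>x. 0 \<le> v x" and C0: "0 < C0"
    and sub: "\<And>x y. v (x + y) \<le> C0 * v x * v y"
    and vm [measurable]: "v \<in> borel_measurable lebesgue"
    and pqr: "1 \<le> p" "1 \<le> q" "1 \<le> r" "1 + inverse r = inverse p + inverse q"
    and m1 [measurable]: "f1 \<in> borel_measurable lebesgue"
    and m2 [measurable]: "f2 \<in> borel_measurable lebesgue"
  shows "Lp_norm r (\<lambda>x. conv f1 f2 x * complex_of_real (v x))
    \<le> ennreal C0 * Lp_norm p (\<lambda>x. f1 x * complex_of_real (v x))
                  * Lp_norm q (\<lambda>x. f2 x * complex_of_real (v x))"
proof (rule young_dominated[OF _ _ C0 _ pqr])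
  show "(\<lambda>x. f1 x * complex_of_real (v x)) \<in> borel_measurable lebesgue"
    "(\<lambda>x. f2 x * complex_of_real (v x)) \<in> borel_measurable lebesgue"
    by measurable
  show "ennreal (cmod (conv f1 f2 x * complex_of_real (v x))) \<le> ennreal C0 *
    (\<integral>\<^sup>+y. ennreal (cmod (f1 (x - y) * complex_of_real (v (x - y)))
                    * cmod (f2 y * complex_of_real (v y))) \<partial>lebesgue)" for x
    using C0 by (intro weighted_conv_dominated v0 sub m1 m2 vm) simp
qed

lemma conv_indicator_balls:
  fixes x y z :: "'a::euclidean_space"
  assumes z: "z \<in> ball (x + y) \<epsilon>"
  shows "conv (indicator (ball x (2 * \<epsilon>))) (indicator (ball y \<epsilon>)) z
    = complex_of_real (measure lebesgue (ball y \<epsilon>))"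
proof -
  have "conv (indicator (ball x (2 * \<epsilon>))) (indicator (ball y \<epsilon>)) z
      = (\<integral>w. complex_of_real (indicator (ball y \<epsilon>) w) \<partial>lebesgue)"
    unfolding conv_def
  proof (intro Bochner_Integration.integral_cong refl)
    fix w
    have "z - w \<in> ball x (2 * \<epsilon>)" if "w \<in> ball y \<epsilon>"
    proof -
      have "norm (x - (z - w)) \<le> norm (x + y - z) + norm (w - y)"
        using norm_triangle_ineq[of "x + y - z" "w - y"] by (simp add: algebra_simps)
      also have "\<dots> < \<epsilon> + \<epsilon>"
        using z that by (intro add_strict_mono) (auto simp: dist_norm norm_minus_commute)
      finally show ?thesis by (simp add: dist_norm)
    qed
    then show "indicator (ball x (2 * \<epsilon>)) (z - w) * indicator (ball y \<epsilon>) w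
        = complex_of_real (indicator (ball y \<epsilon>) w)"
      by (cases "w \<in> ball y \<epsilon>") auto
  qed
  also have "\<dots> = complex_of_real (measure lebesgue (ball y \<epsilon>))"
    by simp
  finally show ?thesis .
qed

lemma Lp_top_weighted_indicator:
  fixes v :: "'a::euclidean_space \<Rightarrow> real"
  assumes v0: "\<And>z. 0 \<le> v z" and bound: "\<And>z. z \<in> ball c e \<Longrightarrow> v z \<le> B" and "0 \<le> B"
  shows "Lp_norm top (\<lambda>z. indicator (ball c e) z * complex_of_real (v z)) \<le> ennreal B"
  using assms by (intro Lp_top_upper) (auto simp: indicator_def norm_mult ennreal_leI)

lemma Lp_one_weighted_indicator:
  fixes v :: "'a::euclidean_space \<Rightarrow> real"
  assumes v0: "\<And>z. 0 \<le> v z" and bound: "\<And>z. z \<in> ball c e \<Longrightarrow> v z \<le> B" and "0 \<le> B"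
  shows "Lp_norm 1 (\<lambda>z. indicator (ball c e) z * complex_of_real (v z))
    \<le> ennreal (B * measure lebesgue (ball c e))"
proof -
  have "Lp_norm 1 (\<lambda>z. indicator (ball c e) z * complex_of_real (v z))
      \<le> (\<integral>\<^sup>+z. ennreal B * indicator (ball c e) z \<partial>lebesgue)"
    unfolding Lp_one
    using assms by (intro nn_integral_mono) (auto simp: indicator_def norm_mult ennreal_leI)
  also have "\<dots> = ennreal B * emeasure lebesgue (ball c e)"
    by (simp add: nn_integral_cmult_indicator)
  also have "\<dots> = ennreal (B * measure lebesgue (ball c e))"
    using \<open>0 \<le> B\<close> by (simp add: emeasure_eq_measure2 ennreal_mult)
  finally show ?thesis .
qed

lemma continuity_radius:
  fixes v :: "'a::metric_space \<Rightarrow> real"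
  assumes vc: "continuous_on UNIV v" and \<eta>: "0 < \<eta>"
  obtains \<epsilon> where "0 < \<epsilon>"
    "\<And>z. z \<in> ball x (2 * \<epsilon>) \<Longrightarrow> v z \<le> v x + \<eta>"
    "\<And>z. z \<in> ball y \<epsilon> \<Longrightarrow> v z \<le> v y + \<eta>"
    "\<And>z. z \<in> ball w \<epsilon> \<Longrightarrow> v w - \<eta> \<le> v z"
proof -
  have "\<exists>d>0. \<forall>z. dist z c < d \<longrightarrow> \<bar>v z - v c\<bar> < \<eta>" for c
    using vc \<eta> unfolding continuous_on_iff by (auto simp: dist_real_def)
  then obtain d :: "'a \<Rightarrow> real"
    where d: "\<And>c. d c > 0" "\<And>c z. dist z c < d c \<Longrightarrow> \<bar>v z - v c\<bar> < \<eta>"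
    by metis
  define e where "e = min (d x) (min (d y) (d w)) / 2"
  have e: "0 < e" "2 * e \<le> d x" "e \<le> d y" "e \<le> d w"
    using d(1)[of x] d(1)[of y] d(1)[of w] by (auto simp: e_def)
  have close: "\<bar>v z - v c\<bar> < \<eta>" if "z \<in> ball c r" "r \<le> d c" for z c r
    using d(2)[of z c] that by (auto simp: dist_commute)
  show thesis
    by (rule that[OF e(1)]) (use close e in \<open>fastforce simp: abs_less_iff\<close>)+
qed

lemma submultiplicative_up_to:
  fixes v :: "'a::euclidean_space \<Rightarrow> real" and x y :: 'a
  assumes vc: "continuous_on UNIV v" and v0: "\<And>z. 0 \<le> v z" and C0: "0 \<le> C0"
    and young: "\<And>f1 f2 :: 'a \<Rightarrow> complex.
      f1 \<in> borel_measurable lebesgue \<Longrightarrow> f2 \<in> borel_measurable lebesgue \<Longrightarrow>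
      Lp_norm top (\<lambda>z. conv f1 f2 z * complex_of_real (v z))
        \<le> ennreal C0 * Lp_norm top (\<lambda>z. f1 z * complex_of_real (v z))
                    * Lp_norm 1 (\<lambda>z. f2 z * complex_of_real (v z))"
    and \<eta>: "0 < \<eta>"
  shows "v (x + y) - \<eta> \<le> C0 * (v x + \<eta>) * (v y + \<eta>)"
proof -
  obtain \<epsilon> where \<epsilon>: "0 < \<epsilon>"
    and near_x: "\<And>z. z \<in> ball x (2 * \<epsilon>) \<Longrightarrow> v z \<le> v x + \<eta>"
    and near_y: "\<And>z. z \<in> ball y \<epsilon> \<Longrightarrow> v z \<le> v y + \<eta>"
    and near_xy: "\<And>z. z \<in> ball (x + y) \<epsilon> \<Longrightarrow> v (x + y) - \<eta> \<le> v z"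
    using continuity_radius[OF vc \<eta>] by blast
  define m where "m = measure lebesgue (ball y \<epsilon>)"
  have m: "0 < m" unfolding m_def by (rule ball_measure_pos[OF \<epsilon>])
  define f1 :: "'a \<Rightarrow> complex" where "f1 = indicator (ball x (2 * \<epsilon>))"
  define f2 :: "'a \<Rightarrow> complex" where "f2 = indicator (ball y \<epsilon>)"
  have "f1 \<in> borel_measurable lebesgue" "f2 \<in> borel_measurable lebesgue"
    unfolding f1_def f2_def by (auto intro: borel_measurable_indicator fmeasurableD)
  note test = young[OF this]
  have "ennreal ((v (x + y) - \<eta>) * m) \<le> Lp_norm top (\<lambda>z. conv f1 f2 z * complex_of_real (v z))"
  proof (rule Lp_top_lower[OF \<epsilon>])
    fix z assume z: "z \<in> ball (x + y) \<epsilon>"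
    have "(v (x + y) - \<eta>) * m \<le> m * v z" using near_xy[OF z] m by (simp add: mult.commute)
    also have "\<dots> = cmod (conv f1 f2 z * complex_of_real (v z))"
      using conv_indicator_balls[OF z] m v0[of z] by (simp add: f1_def f2_def m_def norm_mult)
    finally show "(v (x + y) - \<eta>) * m \<le> cmod (conv f1 f2 z * complex_of_real (v z))" .
  qed
  also have "\<dots> \<le> ennreal C0 * ennreal (v x + \<eta>) * ennreal ((v y + \<eta>) * m)"
  proof -
    have "Lp_norm top (\<lambda>z. f1 z * complex_of_real (v z)) \<le> ennreal (v x + \<eta>)"
      unfolding f1_def using near_x v0[of x] \<eta> by (intro Lp_top_weighted_indicator v0) auto
    moreover have "Lp_norm 1 (\<lambda>z. f2 z * complex_of_real (v z)) \<le> ennreal ((v y + \<eta>) * m)"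
      unfolding f2_def m_def using near_y v0[of y] \<eta> by (intro Lp_one_weighted_indicator v0) auto
    ultimately show ?thesis
      using test by (meson order.trans mult_mono mult_left_mono zero_le)
  qed
  also have "\<dots> = ennreal (C0 * (v x + \<eta>) * (v y + \<eta>) * m)"
    using C0 v0[of x] v0[of y] \<eta> m by (simp add: ennreal_mult' ennreal_mult'' mult.assoc)
  finally have "(v (x + y) - \<eta>) * m \<le> C0 * (v x + \<eta>) * (v y + \<eta>) * m"
    using C0 v0[of x] v0[of y] \<eta> m by (subst (asm) ennreal_le_iff) auto
  then show ?thesis using m by simp
qed

lemma limit_up_to:
  fixes A B D c :: real
  assumes H: "\<And>\<eta>. \<eta> > 0 \<Longrightarrow> A - \<eta> \<le> c * (B + \<eta>) * (D + \<eta>)"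
  shows "A \<le> c * B * D"
proof -
  have lim: "((\<lambda>\<eta>. c * (B + \<eta>) * (D + \<eta>) + \<eta>) \<longlongrightarrow> c * (B + 0) * (D + 0) + 0) (at_right (0::real))"
    by (intro tendsto_intros tendsto_ident_at)
  have ev: "eventually (\<lambda>\<eta>. A \<le> c * (B + \<eta>) * (D + \<eta>) + \<eta>) (at_right (0::real))"
  proof (rule eventually_at_rightI[of 0 1])
    fix \<eta> :: real assume "\<eta> \<in> {0<..<1}"
    then show "A \<le> c * (B + \<eta>) * (D + \<eta>) + \<eta>" using H[of \<eta>] by auto
  qed simp
  have "A \<le> c * (B + 0) * (D + 0) + 0"
    by (rule tendsto_lowerbound[OF lim ev]) simp
  then show ?thesis by simp
qed

theorem proposition3p1:
  fixes v :: "'a::euclidean_space \<Rightarrow> real" and C\<^sub>0 :: real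
  assumes "continuous_on UNIV v" and "\<forall>x. v x > 0" and "C\<^sub>0 > 0"
  shows "(\<forall>x y. v (x + y) \<le> C\<^sub>0 * v x * v y) \<longleftrightarrow>
    (\<forall>p q r :: ennreal. \<forall>f\<^sub>1 f\<^sub>2 :: 'a \<Rightarrow> complex.
       1 \<le> p \<and> 1 \<le> q \<and> 1 \<le> r \<and> 1 + inverse r = inverse p + inverse q \<and>
       f\<^sub>1 \<in> borel_measurable lebesgue \<and> f\<^sub>2 \<in> borel_measurable lebesgue \<longrightarrow>
       Lp_norm r (\<lambda>x. conv f\<^sub>1 f\<^sub>2 x * complex_of_real (v x))
         \<le> ennreal C\<^sub>0 * Lp_norm p (\<lambda>x. f\<^sub>1 x * complex_of_real (v x))
                       * Lp_norm q (\<lambda>x. f\<^sub>2 x * complex_of_real (v x)))"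
    (is "?submult \<longleftrightarrow> ?young")
proof
  have v0: "\<And>z. 0 \<le> v z" using assms(2) less_imp_le by blast
  have "v \<in> borel_measurable borel" using borel_measurable_continuous_onI[OF assms(1)] by simp
  then have vm: "v \<in> borel_measurable lebesgue" by (simp add: measurable_completion)
  {
    assume ?submult
    then have sub: "\<And>x y. v (x + y) \<le> C\<^sub>0 * v x * v y" by blast
    show ?young
      by (intro allI impI, elim conjE) (rule weighted_young[OF v0 assms(3) sub vm])
  next
    assume ?young
    have young_sup_one: "Lp_norm top (\<lambda>z. conv f\<^sub>1 f\<^sub>2 z * complex_of_real (v z))
        \<le> ennreal C\<^sub>0 * Lp_norm top (\<lambda>z. f\<^sub>1 z * complex_of_real (v z))
                      * Lp_norm 1 (\<lambda>z. f\<^sub>2 z * complex_of_real (v z))"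
      if "f\<^sub>1 \<in> borel_measurable lebesgue" "f\<^sub>2 \<in> borel_measurable lebesgue" for f\<^sub>1 f\<^sub>2
      by (rule \<open>?young\<close>[rule_format]) (use that in simp)
    have C0: "0 \<le> C\<^sub>0" using assms(3) by simp
    show ?submult
    proof (intro allI)
      fix x y
      show "v (x + y) \<le> C\<^sub>0 * v x * v y"
        by (rule limit_up_to) (rule submultiplicative_up_to[OF assms(1) v0 C0 young_sup_one])
    qed
  }
qed

end
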